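(* Let $\Phi:\mathbb R^n\times\mathbb R^m\times\mathbb R^m\to\mathbb R$ and let $\{w^{(j)}\}_{j\ge0}$, $w^{(j)}=(X^{(j)},Y^{(j)},Z^{(j)})$, be a sequence satisfying Assumptions (A1), (A2), (A3). Then for every $\varepsilon>0$ there is a finite index $j_\varepsilon$ and multipliers $(u,v)\in\mathcal M_M(w^{(j_\varepsilon)})$ with $r_{\rm in}(w^{(j_\varepsilon)};u,v)\le\varepsilon$; in particular $r_{\rm in}(w^{(j_\varepsilon)})\le\varepsilon$. Moreover, for every $N\ge0$, \[ \min_{0\le j\le N}r_{\rm in}(w^{(j)})\le\sqrt{\frac{\Phi(w^{(0)})-\inf_{w:(Y,Z)\in\mathcal C}\Phi(w)}{c_X(N+1)}}. \]
   Context: Notation: $w=(X,Y,Z)\in\mathbb R^n\times\mathbb R^m\times\mathbb R^m$; $\mathcal C=\{(Y,Z): Y\ge0,\ Z\ge0,\ Y_iZ_i=0\ \forall i\}$. For $(Y,Z)\in\mathcal C$: $I_{+0}(w)=\{i:Y_i>0,Z_i=0\}$, $I_{0+}(w)=\{i:Y_i=0,Z_i>0\}$, $I_{00}(w)=\{i:Y_i=Z_i=0\}$; $\mathcal Q_M=\mathbb R_{++}^2\cup(\mathbb R\times\{0\})\cup(\{0\}\times\mathbb R)$; $\mathcal M_M(w)$ is the set of $(u,v)\in\mathbb R^m\times\mathbb R^m$ with $u_i=0$ for $i\in I_{+0}(w)$, $v_i=0$ for $i\in I_{0+}(w)$, $(u_i,v_i)\in\mathcal Q_M$ for $i\in I_{00}(w)$.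 $r_{\rm pri}(w)=\max\{\|\min(Y,0)\|_\infty,\|\min(Z,0)\|_\infty,\|Y\circ Z\|_\infty\}$; for $(u,v)\in\mathcal M_M(w)$, $r_{\rm in}(w;u,v)=\max\{\|\nabla_X\Phi(w)\|_\infty,\|\nabla_Y\Phi(w)-u\|_\infty,\|\nabla_Z\Phi(w)-v\|_\infty,r_{\rm pri}(w)\}$, and $r_{\rm in}(w)=\inf_{(u,v)\in\mathcal M_M(w)}r_{\rm in}(w;u,v)$. Assumption (A1): $\Phi$ is continuously differentiable on a neighborhood of the iterates with Lipschitz gradient there; $\{w^{(j)}\}$ is bounded; and $\inf\{\Phi(X,Y,Z):(Y,Z)\in\mathcal C\}>-\infty$. Assumption (A2): there is $c_X>0$ such that for all $j\ge0$, $\Phi(w^{(j+1)})\le\Phi(w^{(j)})-c_X\|\nabla_X\Phi(w^{(j)})\|_\infty^2$. Assumption (A3): for every $j$, $(Y^{(j)},Z^{(j)})\in\arg\min_{(Y,Z)\in\mathcal C}\Phi(X^{(j)},Y,Z)$. (These model the iterates of a two-block coordinate descent: a sufficient-decrease step in $X$ followed by exact minimization over $(Y,Z)\in\mathcal C$.) *)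

theory Defs
  imports "HOL-Analysis.Analysis"
begin

type_synonym ('n,'m) pt = "(real^'n) \<times> (real^'m) \<times> (real^'m)"

definition compC :: "((real^'m) \<times> (real^'m)) set" where
  "compC = {(Y,Z). \<forall>i. Y$i \<ge> 0 \<and> Z$i \<ge> 0 \<and> Y$i * Z$i = 0}"

definition QM :: "(real \<times> real) set" where
  "QM = {(a,b). a > 0 \<and> b > 0} \<union> {(a,b). b = 0} \<union> {(a,b). a = 0}"

definition Ipz :: "('n::finite,'m::finite) pt \<Rightarrow> 'm set" where
  "Ipz w = (case w of (X,Y,Z) \<Rightarrow> {i. Y$i > 0 \<and> Z$i = 0})"

definition Izp :: "('n::finite,'m::finite) pt \<Rightarrow> 'm set" where
  "Izp w = (case w of (X,Y,Z) \<Rightarrow> {i. Y$i = 0 \<and> Z$i > 0})"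

definition Izz :: "('n::finite,'m::finite) pt \<Rightarrow> 'm set" where
  "Izz w = (case w of (X,Y,Z) \<Rightarrow> {i. Y$i = 0 \<and> Z$i = 0})"

definition MM :: "('n::finite,'m::finite) pt \<Rightarrow> ((real^'m) \<times> (real^'m)) set" where
  "MM w = {(u,v). (\<forall>i\<in>Ipz w. u$i = 0) \<and> (\<forall>i\<in>Izp w. v$i = 0)
                 \<and> (\<forall>i\<in>Izz w. (u$i, v$i) \<in> QM)}"

definition gradPhi :: "(('n::finite,'m::finite) pt \<Rightarrow> real) \<Rightarrow> ('n,'m) pt \<Rightarrow> ('n,'m) pt" where
  "gradPhi Phi w = (THE D. GDERIV Phi w :> D)"

definition gradX :: "(('n::finite,'m::finite) pt \<Rightarrow> real) \<Rightarrow> ('n,'m) pt \<Rightarrow> real^'n" where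
  "gradX Phi w = fst (gradPhi Phi w)"
definition gradY :: "(('n::finite,'m::finite) pt \<Rightarrow> real) \<Rightarrow> ('n,'m) pt \<Rightarrow> real^'m" where
  "gradY Phi w = fst (snd (gradPhi Phi w))"
definition gradZ :: "(('n::finite,'m::finite) pt \<Rightarrow> real) \<Rightarrow> ('n,'m) pt \<Rightarrow> real^'m" where
  "gradZ Phi w = snd (snd (gradPhi Phi w))"

definition r_pri :: "('n::finite,'m::finite) pt \<Rightarrow> real" where
  "r_pri w = (case w of (X,Y,Z) \<Rightarrow>
     max (infnorm (\<chi> i. min (Y$i) 0))
       (max (infnorm (\<chi> i. min (Z$i) 0)) (infnorm (\<chi> i. Y$i * Z$i))))"

definition r_in_uv :: "(('n::finite,'m::finite) pt \<Rightarrow> real) \<Rightarrow> ('n,'m) pt \<Rightarrow> real^'m \<Rightarrow> real^'m \<Rightarrow> real" where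
  "r_in_uv Phi w u v =
     max (infnorm (gradX Phi w))
       (max (infnorm (gradY Phi w - u)) (max (infnorm (gradZ Phi w - v)) (r_pri w)))"

definition r_in :: "(('n::finite,'m::finite) pt \<Rightarrow> real) \<Rightarrow> ('n,'m) pt \<Rightarrow> real" where
  "r_in Phi w = Inf ((\<lambda>(u,v). r_in_uv Phi w u v) ` MM w)"

definition Phi_inf :: "(('n::finite,'m::finite) pt \<Rightarrow> real) \<Rightarrow> real" where
  "Phi_inf Phi = Inf {Phi (X,Y,Z) | X Y Z. (Y,Z) \<in> compC}"

end

theory Submission imports Defs begin

text \<open>Exact minimisation over the complementarity set \<open>C\<close> makes the partial gradient
  \<open>(\<nabla>\<^sub>Y\<Phi>, \<nabla>\<^sub>Z\<Phi>)\<close> itself an admissible M-multiplier at every iterate: along each coordinate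
  ray that stays in \<open>C\<close> the one-sided directional derivative is nonnegative, which forces the
  sign pattern of \<open>\<M>\<^sub>M\<close>. Since the iterates are feasible, \<open>r\<^sub>p\<^sub>r\<^sub>i = 0\<close> and so
  \<open>r\<^sub>i\<^sub>n(w\<^sub>j) \<le> \<parallel>\<nabla>\<^sub>X\<Phi>(w\<^sub>j)\<parallel>\<^sub>\<infinity>\<close>. Telescoping the sufficient decrease gives
  \<open>c\<^sub>X \<Sum>\<^sub>j\<^sub>\<le>\<^sub>N \<parallel>\<nabla>\<^sub>X\<Phi>(w\<^sub>j)\<parallel>\<^sub>\<infinity>\<^sup>2 \<le> \<Phi>(w\<^sub>0) - inf \<Phi>\<close>, so the smallest of these squares is at most
  their average.\<close>

lemma gderiv_unique:
  assumes "GDERIV f x :> D" and "GDERIV f x :> D'"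
  shows "D' = D"
proof -
  have "(\<lambda>h. inner h D') = (\<lambda>h. inner h D)"
    using assms has_derivative_unique unfolding gderiv_def by blast
  then have "inner (D' - D) (D' - D) = 0"
    by (metis inner_diff_right right_minus_eq)
  then show ?thesis by simp
qed

lemma differentiable_imp_gderiv:
  fixes f :: "'a::euclidean_space \<Rightarrow> real"
  assumes "f differentiable (at x)"
  shows "GDERIV f x :> (THE D. GDERIV f x :> D)"
proof -
  obtain f' where f': "(f has_derivative f') (at x)"
    using assms differentiable_def by blast
  have "f' = (\<lambda>h. inner h (adjoint f' 1))"
    using adjoint_works[OF has_derivative_linear[OF f']] by (simp add: fun_eq_iff)
  with f' have grad: "GDERIV f x :> adjoint f' 1"
    by (simp add: gderiv_def)
  then show ?thesis
    by (rule theI) (use grad gderiv_unique in blast)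
qed

lemma gradPhi_gderiv:
  "Phi differentiable (at w) \<Longrightarrow> GDERIV Phi w :> gradPhi Phi w"
  unfolding gradPhi_def by (rule differentiable_imp_gderiv)

lemma gderiv_nonneg_if_min_along_ray:
  fixes f :: "'a::real_inner \<Rightarrow> real"
  assumes grad: "GDERIV f x :> D" and "d > 0"
    and min: "\<And>t. 0 < t \<Longrightarrow> t < d \<Longrightarrow> f x \<le> f (x + t *\<^sub>R h)"
  shows "inner h D \<ge> 0"
proof -
  have ray: "((\<lambda>t. x + t *\<^sub>R h) has_derivative (\<lambda>t. t *\<^sub>R h)) (at 0)"
    by (auto intro!: derivative_eq_intros)
  have "(f has_derivative (\<lambda>h. inner h D)) (at ((\<lambda>t. x + t *\<^sub>R h) 0))"
    using grad unfolding gderiv_def by simp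
  from has_derivative_compose[OF ray this]
  have "((\<lambda>t. f (x + t *\<^sub>R h)) has_derivative (\<lambda>t. inner (t *\<^sub>R h) D)) (at 0)"
    by simp
  then have "((\<lambda>t. f (x + t *\<^sub>R h)) has_real_derivative inner h D) (at 0)"
    unfolding has_field_derivative_def
    by (rule has_derivative_eq_rhs) (auto simp: fun_eq_iff mult.commute)
  then have "((\<lambda>t. (f (x + t *\<^sub>R h) - f x) / t) \<longlongrightarrow> inner h D) (at_right 0)"
    unfolding has_field_derivative_iff by (simp add: filterlim_at_split)
  moreover have "eventually (\<lambda>t. 0 \<le> (f (x + t *\<^sub>R h) - f x) / t) (at_right (0::real))"
    unfolding eventually_at_right_field using \<open>d > 0\<close> min by (intro exI[of _ d]) auto
  ultimately show ?thesis
    by (rule tendsto_lowerbound) simp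
qed

lemma partial_min_gderiv_nonneg:
  fixes f :: "'a::real_inner \<times> 'b::real_inner \<Rightarrow> real"
  assumes grad: "GDERIV f (x, y) :> G"
    and min: "\<And>y'. y' \<in> S \<Longrightarrow> f (x, y) \<le> f (x, y')"
    and "d > 0" and feasible: "\<And>t. 0 < t \<Longrightarrow> t < d \<Longrightarrow> y + t *\<^sub>R h \<in> S"
  shows "inner h (snd G) \<ge> 0"
proof -
  have "inner (0, h) G \<ge> 0"
    using grad \<open>d > 0\<close> by (rule gderiv_nonneg_if_min_along_ray) (simp add: min feasible)
  then show ?thesis by (cases G) simp
qed

lemma compC_add_axis_fst:
  assumes "(Y, Z) \<in> compC" and "Z $ i = 0" and "Y $ i + t * s \<ge> 0"
  shows "(Y, Z) + t *\<^sub>R (axis i s, 0) \<in> compC"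
  using assms unfolding compC_def by (auto simp: axis_def)

lemma compC_add_axis_snd:
  assumes "(Y, Z) \<in> compC" and "Y $ i = 0" and "Z $ i + t * s \<ge> 0"
  shows "(Y, Z) + t *\<^sub>R (0, axis i s) \<in> compC"
  using assms unfolding compC_def by (auto simp: axis_def)

lemma block_minimizer_gradient_in_MM:
  assumes diff: "Phi differentiable (at w)" and feasible: "snd w \<in> compC"
    and min: "\<forall>Y Z. (Y, Z) \<in> compC \<longrightarrow> Phi w \<le> Phi (fst w, Y, Z)"
  shows "(gradY Phi w, gradZ Phi w) \<in> MM w"
proof -
  obtain X Y Z where w: "w = (X, Y, Z)" by (cases w) auto
  obtain gX gY gZ where G: "gradPhi Phi w = (gX, gY, gZ)" by (cases "gradPhi Phi w") auto
  have grad: "GDERIV Phi (X, (Y, Z)) :> (gX, gY, gZ)"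
    using gradPhi_gderiv[OF diff] unfolding G by (simp add: w)
  have C: "(Y, Z) \<in> compC" and YZ_nonneg: "Y $ i \<ge> 0" "Z $ i \<ge> 0" for i
    using feasible by (auto simp: w compC_def)
  have min_YZ: "\<And>V. V \<in> compC \<Longrightarrow> Phi (X, (Y, Z)) \<le> Phi (X, V)"
    using min by (auto simp: w)
  have gY_sign: "s * gY $ i \<ge> 0"
    if "Z $ i = 0" "d > 0" "\<And>t. 0 < t \<Longrightarrow> t < d \<Longrightarrow> Y $ i + t * s \<ge> 0" for i s d
  proof -
    have "inner (axis i s, 0) (snd (gX, gY, gZ)) \<ge> 0"
      by (rule partial_min_gderiv_nonneg[OF grad min_YZ \<open>d > 0\<close>
            compC_add_axis_fst[OF C that(1) that(3)]])
    then show ?thesis by (simp add: inner_axis')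
  qed
  have gZ_sign: "s * gZ $ i \<ge> 0"
    if "Y $ i = 0" "d > 0" "\<And>t. 0 < t \<Longrightarrow> t < d \<Longrightarrow> Z $ i + t * s \<ge> 0" for i s d
  proof -
    have "inner (0, axis i s) (snd (gX, gY, gZ)) \<ge> 0"
      by (rule partial_min_gderiv_nonneg[OF grad min_YZ \<open>d > 0\<close>
            compC_add_axis_snd[OF C that(1) that(3)]])
    then show ?thesis by (simp add: inner_axis')
  qed
  have "gY $ i = 0" if "Y $ i > 0" "Z $ i = 0" for i
    using gY_sign[where s = 1 and d = 1] gY_sign[where s = "-1" and d = "Y $ i"] that YZ_nonneg
    by force
  moreover have "gZ $ i = 0" if "Y $ i = 0" "Z $ i > 0" for i
    using gZ_sign[where s = 1 and d = 1] gZ_sign[where s = "-1" and d = "Z $ i"] that YZ_nonneg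
    by force
  moreover have "gY $ i \<ge> 0" "gZ $ i \<ge> 0" if "Y $ i = 0" "Z $ i = 0" for i
    using gY_sign[where s = 1 and d = 1] gZ_sign[where s = 1 and d = 1] that YZ_nonneg by auto
  ultimately show ?thesis
    unfolding MM_def gradY_def gradZ_def G
    by (auto simp: Ipz_def Izp_def Izz_def QM_def w) (metis less_le)+
qed

lemma r_pri_eq_0:
  assumes "snd w \<in> compC"
  shows "r_pri w = 0"
proof -
  obtain X Y Z where w: "w = (X, Y, Z)" by (cases w) auto
  have "(\<chi> i. min (Y $ i) 0) = 0" "(\<chi> i. min (Z $ i) 0) = 0" "(\<chi> i. Y $ i * Z $ i) = 0"
    using assms by (auto simp: w compC_def vec_eq_iff)
  then show ?thesis by (simp add: r_pri_def w infnorm_0)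
qed

lemma r_in_le_infnorm_gradX:
  assumes "Phi differentiable (at w)" and "snd w \<in> compC"
    and "\<forall>Y Z. (Y, Z) \<in> compC \<longrightarrow> Phi w \<le> Phi (fst w, Y, Z)"
  shows "r_in_uv Phi w (gradY Phi w) (gradZ Phi w) = infnorm (gradX Phi w)"
    and "r_in Phi w \<le> infnorm (gradX Phi w)"
proof -
  show uv: "r_in_uv Phi w (gradY Phi w) (gradZ Phi w) = infnorm (gradX Phi w)"
    using r_pri_eq_0[OF assms(2)] by (simp add: r_in_uv_def infnorm_pos_le infnorm_0)
  have bdd: "bdd_below ((\<lambda>(u, v). r_in_uv Phi w u v) ` MM w)"
    by (rule bdd_belowI[of _ 0]) (auto simp: r_in_uv_def infnorm_pos_le intro: max.coboundedI1)
  show "r_in Phi w \<le> infnorm (gradX Phi w)"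
    using cInf_lower[OF imageI[OF block_minimizer_gradient_in_MM[OF assms]] bdd] uv
    unfolding r_in_def by simp
qed

lemma Phi_inf_le:
  assumes "bdd_below {Phi (X, Y, Z) | X Y Z. (Y, Z) \<in> compC}" and "snd w \<in> compC"
  shows "Phi_inf Phi \<le> Phi w"
  unfolding Phi_inf_def using assms by (cases w) (auto intro!: cInf_lower)

lemma sufficient_decrease_sum_bound:
  fixes f a :: "nat \<Rightarrow> real"
  assumes decrease: "\<And>j. f (Suc j) \<le> f j - c * (a j)\<^sup>2" and lower: "\<And>j. m \<le> f j"
  shows "c * (\<Sum>j\<le>N. (a j)\<^sup>2) \<le> f 0 - m"
proof -
  have "f (Suc N) \<le> f 0 - c * (\<Sum>j\<le>N. (a j)\<^sup>2)"
  proof (induction N)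
    case 0
    then show ?case using decrease[of 0] by simp
  next
    case (Suc N)
    then show ?case using decrease[of "Suc N"] by (simp add: algebra_simps)
  qed
  then show ?thesis using lower[of "Suc N"] by linarith
qed

lemma sufficient_decrease_min_bound:
  fixes f a :: "nat \<Rightarrow> real"
  assumes "c > 0"
    and decrease: "\<And>j. f (Suc j) \<le> f j - c * (a j)\<^sup>2" and lower: "\<And>j. m \<le> f j"
  shows "\<exists>j\<le>N. a j \<le> sqrt ((f 0 - m) / (c * (real N + 1)))"
proof -
  define q where "q = (f 0 - m) / (c * (real N + 1))"
  have "\<exists>j\<le>N. a j \<le> sqrt q"
  proof (rule ccontr)
    assume "\<not> (\<exists>j\<le>N. a j \<le> sqrt q)"
    then have "q < (a j)\<^sup>2" if "j \<le> N" for j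
      using that real_le_rsqrt by (meson not_le)
    then have "(\<Sum>j\<le>N. q) < (\<Sum>j\<le>N. (a j)\<^sup>2)"
      by (intro sum_strict_mono) auto
    then have "c * ((real N + 1) * q) < c * (\<Sum>j\<le>N. (a j)\<^sup>2)"
      using \<open>c > 0\<close> by (simp add: add.commute)
    moreover have "c * ((real N + 1) * q) = f 0 - m"
      using \<open>c > 0\<close> by (simp add: q_def)
    ultimately show False
      using sufficient_decrease_sum_bound[where f = f and a = a, OF decrease lower, of N]
      by linarith
  qed
  then show ?thesis by (simp add: q_def)
qed

lemma sufficient_decrease_exists_small:
  fixes f a :: "nat \<Rightarrow> real"
  assumes "c > 0"
    and decrease: "\<And>j. f (Suc j) \<le> f j - c * (a j)\<^sup>2" and lower: "\<And>j. m \<le> f j"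
    and "\<epsilon> > 0"
  shows "\<exists>j. a j \<le> \<epsilon>"
proof -
  obtain N :: nat where N: "(f 0 - m) / (c * \<epsilon>\<^sup>2) \<le> real N"
    using real_arch_simple by blast
  have "f 0 - m \<le> c * \<epsilon>\<^sup>2 * real N"
    using N \<open>c > 0\<close> \<open>\<epsilon> > 0\<close> by (simp add: divide_le_eq mult.commute)
  also have "\<dots> \<le> \<epsilon>\<^sup>2 * (c * (real N + 1))"
    using \<open>c > 0\<close> by (simp add: algebra_simps)
  finally have "(f 0 - m) / (c * (real N + 1)) \<le> \<epsilon>\<^sup>2"
    using \<open>c > 0\<close> by (simp add: pos_divide_le_eq)
  then have "sqrt ((f 0 - m) / (c * (real N + 1))) \<le> \<epsilon>"
    using \<open>\<epsilon> > 0\<close> by (simp add: real_le_lsqrt)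
  then show ?thesis
    using sufficient_decrease_min_bound[where f = f and a = a, OF assms(1-3), of N]
    by (auto intro: order_trans)
qed

theorem theorem2:
  fixes Phi :: "(real^'n) \<times> (real^'m) \<times> (real^'m) \<Rightarrow> real"
    and w :: "nat \<Rightarrow> (real^'n) \<times> (real^'m) \<times> (real^'m)"
    and cX :: real
  assumes A1_smooth: "\<exists>U. open U \<and> range w \<subseteq> U \<and> (\<forall>x\<in>U. Phi differentiable (at x))
                         \<and> continuous_on U (gradPhi Phi) \<and> (\<exists>L. L-lipschitz_on U (gradPhi Phi))"
    and A1_bounded: "bounded (range w)"
    and A1_below: "bdd_below {Phi (X,Y,Z) | X Y Z. (Y,Z) \<in> compC}"
    and A2_pos: "cX > 0"
    and A2: "\<And>j. Phi (w (Suc j)) \<le> Phi (w j) - cX * (infnorm (gradX Phi (w j)))\<^sup>2"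
    and A3: "\<And>j. snd (w j) \<in> compC \<and>
               (\<forall>Y Z. (Y,Z) \<in> compC \<longrightarrow> Phi (w j) \<le> Phi (fst (w j), Y, Z))"
  shows "(\<forall>\<epsilon>>0. \<exists>j u v. (u,v) \<in> MM (w j) \<and> r_in_uv Phi (w j) u v \<le> \<epsilon>
                          \<and> r_in Phi (w j) \<le> \<epsilon>)
       \<and> (\<forall>N. Min ((\<lambda>j. r_in Phi (w j)) ` {..N})
               \<le> sqrt ((Phi (w 0) - Phi_inf Phi) / (cX * (real N + 1))))"
proof -
  have diff: "Phi differentiable (at (w j))" for j
    using A1_smooth by blast
  note multiplier = block_minimizer_gradient_in_MM[OF diff conjunct1[OF A3] conjunct2[OF A3]]
    and residual = r_in_le_infnorm_gradX[OF diff conjunct1[OF A3] conjunct2[OF A3]]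
  have lower: "Phi_inf Phi \<le> Phi (w j)" for j
    using A1_below conjunct1[OF A3] by (rule Phi_inf_le)
  note bound = sufficient_decrease_min_bound
      [where f = "\<lambda>j. Phi (w j)" and a = "\<lambda>j. infnorm (gradX Phi (w j))", OF A2_pos A2 lower]
    and small = sufficient_decrease_exists_small
      [where f = "\<lambda>j. Phi (w j)" and a = "\<lambda>j. infnorm (gradX Phi (w j))", OF A2_pos A2 lower]
  show ?thesis
  proof (intro conjI allI impI)
    fix \<epsilon> :: real assume "\<epsilon> > 0"
    then obtain j where "infnorm (gradX Phi (w j)) \<le> \<epsilon>"
      using small by blast
    then show "\<exists>j u v. (u,v) \<in> MM (w j) \<and> r_in_uv Phi (w j) u v \<le> \<epsilon> \<and> r_in Phi (w j) \<le> \<epsilon>"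
      using multiplier[of j] residual[of j] by force
  next
    fix N
    obtain j where "j \<le> N" and j: "infnorm (gradX Phi (w j))
        \<le> sqrt ((Phi (w 0) - Phi_inf Phi) / (cX * (real N + 1)))"
      using bound by blast
    then have "Min ((\<lambda>j. r_in Phi (w j)) ` {..N}) \<le> r_in Phi (w j)"
      by (intro Min_le) auto
    with j residual(2)[of j] show "Min ((\<lambda>j. r_in Phi (w j)) ` {..N})
        \<le> sqrt ((Phi (w 0) - Phi_inf Phi) / (cX * (real N + 1)))"
      by linarith
  qed
qed

end
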